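(* Let $V$ be a population of $n$ individuals with pseudo-metric $d$, let $k$ be a panel size, and let $\mathcal{G}$ be the output of the Greedy Capture procedure (defined in the context) on $V$ with panel size $k$. Let $\alpha\ge 1$ and let $P\subseteq V$ be such that for every $G\in\mathcal{G}$ there exists $p\in P$ with $d(p,c_G)\le\alpha\cdot r_G$. Then $P$ satisfies $(\alpha+3)$-PFC for population $V$ with panel size $k$.
   Context: $B(x,\delta)=\{u\in V: d(x,u)\le\delta\}$. Greedy Capture with panel size $K$ (Modified Greedy Capture with every individual initially its own group): maintain a set $U$ of uncovered individuals, initially $V$, and an output collection initially empty; increase $\delta$ continuously from $0$ while $U\ne\emptyset$. At each $\delta$: for each already formed group with center $c$, remove $U\cap B(c,\delta)$ from $U$; then, while some $x\in V$ has $|U\cap B(x,\delta)|\ge n/K$, form the group $U\cap B(x,\delta)$ with center $c_G=x$ and radius $r_G=\delta$, add it to the output and remove its members from $U$. A set $P\subseteq V$ satisfies $\gamma$-PFC for population $V$ with panel size $k$ if for every $S\subseteq V$ with $|S|\ge n/k$ there exist $v\in S$, $p\in P$ with $d(v,p)\le\gamma\cdot\min_{y\in V}\max_{u\in S}d(u,y)$. *)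

theory Defs
  imports Complex_Main
begin

definition pseudo_metric_on :: "'a set \<Rightarrow> ('a \<Rightarrow> 'a \<Rightarrow> real) \<Rightarrow> bool" where
  "pseudo_metric_on V d \<longleftrightarrow>
     (\<forall>x\<in>V. d x x = 0) \<and> (\<forall>x\<in>V. \<forall>y\<in>V. d x y = d y x) \<and>
     (\<forall>x\<in>V. \<forall>y\<in>V. \<forall>z\<in>V. d x z \<le> d x y + d y z)"

definition ball_in :: "'a set \<Rightarrow> ('a \<Rightarrow> 'a \<Rightarrow> real) \<Rightarrow> 'a \<Rightarrow> real \<Rightarrow> 'a set" where
  "ball_in V d x \<delta> = {u\<in>V. d x u \<le> \<delta>}"

text \<open>A run of Greedy Capture is recorded as the list of formed groups, in the order
  of formation, each as a triple (G, c_G, r_G).\<close>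
definition gc_uncovered ::
  "'a set \<Rightarrow> ('a \<Rightarrow> 'a \<Rightarrow> real) \<Rightarrow> ('a set \<times> 'a \<times> real) list \<Rightarrow> real \<Rightarrow> 'a set" where
  "gc_uncovered V d gs \<delta> =
     V - (\<Union>(G, c, r)\<in>set gs. G \<union> ball_in V d c \<delta>)"

definition greedy_capture ::
  "'a set \<Rightarrow> ('a \<Rightarrow> 'a \<Rightarrow> real) \<Rightarrow> nat \<Rightarrow> ('a set \<times> 'a \<times> real) list \<Rightarrow> bool" where
  "greedy_capture V d K gs \<longleftrightarrow>
     (\<forall>i<length gs.
        (let (G, c, r) = gs ! i; prev = take i gs;
             lo = (if i = 0 then 0 else snd (snd (gs ! (i - 1)))) in
          c \<in> V \<and> lo \<le> r \<and>
          G = gc_uncovered V d prev r \<inter> ball_in V d c r \<and>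
          real (card G) \<ge> real (card V) / real K \<and>
          (\<forall>\<delta>. lo \<le> \<delta> \<and> \<delta> < r \<longrightarrow>
             (\<forall>x\<in>V. real (card (gc_uncovered V d prev \<delta> \<inter> ball_in V d x \<delta>))
                       < real (card V) / real K)))) \<and>
     (let lo = (if gs = [] then 0 else snd (snd (last gs))) in
       \<forall>\<delta>. lo \<le> \<delta> \<longrightarrow>
         (\<forall>x\<in>V. real (card (gc_uncovered V d gs \<delta> \<inter> ball_in V d x \<delta>))
                   < real (card V) / real K))"

definition PFC :: "'a set \<Rightarrow> ('a \<Rightarrow> 'a \<Rightarrow> real) \<Rightarrow> nat \<Rightarrow> real \<Rightarrow> 'a set \<Rightarrow> bool" where
  "PFC V d k \<gamma> P \<longleftrightarrow>
     (\<forall>S. S \<subseteq> V \<and> S \<noteq> {} \<and> real (card S) \<ge> real (card V) / real k \<longrightarrow>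
        (\<exists>v\<in>S. \<exists>p\<in>P. d v p \<le> \<gamma> * (MIN y\<in>V. MAX u\<in>S. d u y)))"

end

theory Submission
  imports Defs
begin

text \<open>Let \<open>R\<close> be the optimal radius of the coalition \<open>S\<close>, attained by a centre \<open>y\<close>, so
  \<open>S \<subseteq> B(y, R)\<close>. Stop Greedy Capture once all groups of radius at most \<open>R\<close> are formed:
  at that moment no ball of radius \<open>R\<close> holds \<open>n/k\<close> uncovered individuals, so not all of
  \<open>S\<close> is still uncovered. Hence some group \<open>G\<close> with \<open>r\<^sub>G \<le> R\<close> contains or covers at
  radius \<open>R\<close> a member \<open>u\<close> of \<open>S\<close>, i.e. \<open>d(u, c\<^sub>G) \<le> R\<close>, and the representative \<open>p\<close> of \<open>G\<close>
  satisfies \<open>d(u, p) \<le> R + \<alpha> r\<^sub>G \<le> (\<alpha> + 1) R\<close>, which is even better than claimed.\<close>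

lemma pseudo_metric_on_sym:
  "pseudo_metric_on V d \<Longrightarrow> x \<in> V \<Longrightarrow> y \<in> V \<Longrightarrow> d x y = d y x"
  unfolding pseudo_metric_on_def by blast

lemma pseudo_metric_on_triangle:
  "pseudo_metric_on V d \<Longrightarrow> x \<in> V \<Longrightarrow> y \<in> V \<Longrightarrow> z \<in> V \<Longrightarrow> d x z \<le> d x y + d y z"
  unfolding pseudo_metric_on_def by blast

lemma pseudo_metric_on_nonneg:
  assumes "pseudo_metric_on V d" "x \<in> V" "y \<in> V"
  shows "0 \<le> d x y"
proof -
  have "d x x \<le> d x y + d y x"
    using pseudo_metric_on_triangle[OF assms(1,2,3,2)] .
  moreover have "d x x = 0" "d y x = d x y"
    using assms unfolding pseudo_metric_on_def by auto
  ultimately show ?thesis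
    by linarith
qed

lemma min_max_radius_attained:
  assumes "finite V" "V \<noteq> {}" "finite S" "S \<subseteq> V" "pseudo_metric_on V d"
  obtains y where "y \<in> V" "S \<subseteq> ball_in V d y (MIN y\<in>V. MAX u\<in>S. d u y)"
proof -
  have "(MIN y\<in>V. MAX u\<in>S. d u y) \<in> (\<lambda>y. MAX u\<in>S. d u y) ` V"
    using assms(1,2) by (intro Min_in) auto
  then obtain y where y: "y \<in> V" "(MAX u\<in>S. d u y) = (MIN y\<in>V. MAX u\<in>S. d u y)"
    by auto
  have "d y u \<le> (MIN y\<in>V. MAX u\<in>S. d u y)" if "u \<in> S" for u
  proof -
    have "d u y \<le> (MAX u\<in>S. d u y)"
      using assms(3) that by (intro Max_ge) auto
    then show ?thesis
      using y that assms(4) pseudo_metric_on_sym[OF assms(5)] by auto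
  qed
  then show thesis
    using that y assms(4) by (auto simp: ball_in_def)
qed

lemma greedy_capture_nth:
  assumes "greedy_capture V d K gs" "i < length gs" "gs ! i = (G, c, r)"
  shows "c \<in> V" "G = gc_uncovered V d (take i gs) r \<inter> ball_in V d c r"
    and "\<And>\<delta> x. (if i = 0 then 0 else snd (snd (gs ! (i - 1)))) \<le> \<delta> \<Longrightarrow> \<delta> < r \<Longrightarrow> x \<in> V \<Longrightarrow>
      real (card (gc_uncovered V d (take i gs) \<delta> \<inter> ball_in V d x \<delta>)) < real (card V) / real K"
proof -
  have "let (G, c, r) = gs ! i; prev = take i gs;
            lo = (if i = 0 then 0 else snd (snd (gs ! (i - 1)))) in
          c \<in> V \<and> lo \<le> r \<and>
          G = gc_uncovered V d prev r \<inter> ball_in V d c r \<and>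
          real (card G) \<ge> real (card V) / real K \<and>
          (\<forall>\<delta>. lo \<le> \<delta> \<and> \<delta> < r \<longrightarrow>
             (\<forall>x\<in>V. real (card (gc_uncovered V d prev \<delta> \<inter> ball_in V d x \<delta>))
                       < real (card V) / real K))"
    using assms(1,2) unfolding greedy_capture_def by blast
  then show "c \<in> V" "G = gc_uncovered V d (take i gs) r \<inter> ball_in V d c r"
    and "\<And>\<delta> x. (if i = 0 then 0 else snd (snd (gs ! (i - 1)))) \<le> \<delta> \<Longrightarrow> \<delta> < r \<Longrightarrow> x \<in> V \<Longrightarrow>
      real (card (gc_uncovered V d (take i gs) \<delta> \<inter> ball_in V d x \<delta>)) < real (card V) / real K"
    using assms(3) by (simp_all add: Let_def)
qed

lemma greedy_capture_final:
  assumes "greedy_capture V d K gs" "(if gs = [] then 0 else snd (snd (last gs))) \<le> \<delta>" "x \<in> V"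
  shows "real (card (gc_uncovered V d gs \<delta> \<inter> ball_in V d x \<delta>)) < real (card V) / real K"
  using assms unfolding greedy_capture_def Let_def by blast

lemma greedy_capture_group_subset_ball:
  assumes "greedy_capture V d K gs" "(G, c, r) \<in> set gs"
  shows "c \<in> V" "G \<subseteq> ball_in V d c r"
proof -
  obtain i where "i < length gs" "gs ! i = (G, c, r)"
    using assms(2) by (auto simp: in_set_conv_nth)
  from greedy_capture_nth[OF assms(1) this] show "c \<in> V" "G \<subseteq> ball_in V d c r"
    by auto
qed

text \<open>The groups formed before the process passes radius \<open>\<delta>\<close> are the longest prefix of
  groups of radius at most \<open>\<delta>\<close>.\<close>

lemma greedy_capture_sparse_at_radius:
  assumes gc: "greedy_capture V d K gs" and "0 \<le> \<delta>" "x \<in> V"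
  defines "formed \<equiv> takeWhile (\<lambda>(G, c, r). r \<le> \<delta>) gs"
  shows "real (card (gc_uncovered V d formed \<delta> \<inter> ball_in V d x \<delta>)) < real (card V) / real K"
proof -
  define i where "i = length formed"
  have formed_take: "formed = take i gs"
    unfolding i_def formed_def by (rule takeWhile_eq_take)
  have formed_small: "snd (snd g) \<le> \<delta>" if "g \<in> set formed" for g
    using that set_takeWhileD unfolding formed_def by fastforce
  show ?thesis
  proof (cases "i < length gs")
    case True
    obtain G c r where gi: "gs ! i = (G, c, r)" by (cases "gs ! i") auto
    have "\<delta> < r"
      using nth_length_takeWhile[of "\<lambda>(G, c, r). r \<le> \<delta>" gs] True gi
      unfolding i_def formed_def by auto
    moreover have "(if i = 0 then 0 else snd (snd (gs ! (i - 1)))) \<le> \<delta>"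
    proof (cases "i = 0")
      case False
      then have "formed ! (i - 1) = gs ! (i - 1)"
        unfolding i_def formed_def by (intro takeWhile_nth) simp
      then show ?thesis
        using formed_small[OF nth_mem[of "i - 1" formed]] False unfolding i_def by simp
    qed (simp add: \<open>0 \<le> \<delta>\<close>)
    ultimately show ?thesis
      using greedy_capture_nth(3)[OF gc True gi] \<open>x \<in> V\<close> formed_take by simp
  next
    case False
    then have "formed = gs"
      using formed_take by simp
    moreover have "(if gs = [] then 0 else snd (snd (last gs))) \<le> \<delta>"
      using formed_small[of "last gs"] \<open>0 \<le> \<delta>\<close> \<open>formed = gs\<close> by auto
    ultimately show ?thesis
      using greedy_capture_final[OF gc _ \<open>x \<in> V\<close>] by simp
  qed
qed

lemma greedy_capture_reaches_coalition:
  assumes gc: "greedy_capture V d K gs" and "finite V" "0 \<le> \<delta>" "y \<in> V"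
    and S: "S \<subseteq> ball_in V d y \<delta>" "real (card S) \<ge> real (card V) / real K"
  shows "\<exists>(G, c, r)\<in>set gs. r \<le> \<delta> \<and> (\<exists>u\<in>S. u \<in> G \<union> ball_in V d c \<delta>)"
proof (rule ccontr)
  assume untouched: "\<not> ?thesis"
  define formed where "formed = takeWhile (\<lambda>(G, c, r). r \<le> \<delta>) gs"
  have "u \<in> gc_uncovered V d formed \<delta>" if "u \<in> S" for u
  proof -
    have "u \<notin> G \<union> ball_in V d c \<delta>" if "(G, c, r) \<in> set formed" for G c r
      using that \<open>u \<in> S\<close> untouched set_takeWhileD[OF that[unfolded formed_def]] by blast
    then show ?thesis
      using \<open>u \<in> S\<close> S(1) unfolding gc_uncovered_def ball_in_def by blast
  qed
  then have "S \<subseteq> gc_uncovered V d formed \<delta> \<inter> ball_in V d y \<delta>"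
    using S(1) by blast
  then have "card S \<le> card (gc_uncovered V d formed \<delta> \<inter> ball_in V d y \<delta>)"
    using \<open>finite V\<close> by (intro card_mono) (simp_all add: ball_in_def)
  then show False
    using greedy_capture_sparse_at_radius[OF gc \<open>0 \<le> \<delta>\<close> \<open>y \<in> V\<close>] S(2)
    unfolding formed_def by linarith
qed

theorem lemma7:
  fixes V :: "'a set" and d :: "'a \<Rightarrow> 'a \<Rightarrow> real" and k :: nat
    and gs :: "('a set \<times> 'a \<times> real) list" and \<alpha> :: real and P :: "'a set"
  assumes "finite V" and "V \<noteq> {}" and "pseudo_metric_on V d" and "k \<ge> 1"
    and "greedy_capture V d k gs"
    and "\<alpha> \<ge> 1" and "P \<subseteq> V"
    and "\<forall>(G, c, r)\<in>set gs. \<exists>p\<in>P. d p c \<le> \<alpha> * r"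
  shows "PFC V d k (\<alpha> + 3) P"
  unfolding PFC_def
proof (intro allI impI)
  fix S assume S: "S \<subseteq> V \<and> S \<noteq> {} \<and> real (card S) \<ge> real (card V) / real k"
  define R where "R = (MIN y\<in>V. MAX u\<in>S. d u y)"
  obtain y where y: "y \<in> V" "S \<subseteq> ball_in V d y R"
    using min_max_radius_attained[OF assms(1,2) _ _ assms(3)] S finite_subset[OF _ assms(1)]
    unfolding R_def by blast
  have "0 \<le> R"
    using S y pseudo_metric_on_nonneg[OF assms(3)] by (force simp: ball_in_def)
  then obtain G c r u where group: "(G, c, r) \<in> set gs" "r \<le> R"
      and u: "u \<in> S" "u \<in> G \<union> ball_in V d c R"
    using greedy_capture_reaches_coalition[OF assms(5,1) _ y] S by blast
  obtain p where p: "p \<in> P" "d p c \<le> \<alpha> * r"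
    using assms(8) group(1) by blast
  have c: "c \<in> V" "G \<subseteq> ball_in V d c r"
    using greedy_capture_group_subset_ball[OF assms(5) group(1)] by auto
  have "d c u \<le> R"
    using u c group(2) by (auto simp: ball_in_def)
  have "u \<in> V" "p \<in> V"
    using u S p assms(7) by auto
  have "d u p \<le> d c u + d p c"
    using pseudo_metric_on_triangle[OF assms(3) \<open>u \<in> V\<close> c(1) \<open>p \<in> V\<close>]
      pseudo_metric_on_sym[OF assms(3)] c(1) \<open>u \<in> V\<close> \<open>p \<in> V\<close> by simp
  also have "\<dots> \<le> R + \<alpha> * R"
    using \<open>d c u \<le> R\<close> p(2) mult_left_mono[OF group(2), of \<alpha>] assms(6) by linarith
  also have "\<dots> \<le> (\<alpha> + 3) * R"
    using \<open>0 \<le> R\<close> by (simp add: algebra_simps)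
  finally show "\<exists>v\<in>S. \<exists>p\<in>P. d v p \<le> (\<alpha> + 3) * (MIN y\<in>V. MAX u\<in>S. d u y)"
    using u(1) p(1) unfolding R_def by blast
qed

end
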